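(* Let $\mathcal G$ be a second-countable ample groupoid such that (1) $\mathcal G$ is minimal and effective, and (2) every compact open subset of $\mathcal G$ is regular open. Then $A_{\mathbb B}(\mathcal G)$ is congruence-simple.
   Context: $\mathbb B=(\{0,1\},\text{or},\text{and})$. An ample groupoid is a topological groupoid whose unit space $\mathcal G^{(0)}$ is locally compact Hausdorff and totally disconnected and whose source and range maps $s,r$ are local homeomorphisms ($\mathcal G$ need not be Hausdorff). $\mathcal G$ is minimal if $\mathcal G^{(0)}$ has no open invariant subsets other than $\varnothing$ and $\mathcal G^{(0)}$ (invariant: $s(\gamma)\in D\Rightarrow r(\gamma)\in D$); effective if the interior of $\{\gamma:s(\gamma)=r(\gamma)\}$ equals $\mathcal G^{(0)}$. A subset is regular open if it equals the interior of its closure. The Steinberg algebra $A_{\mathbb B}(\mathcal G)$ is the set of $\mathbb B$-valued functions on $\mathcal G$ that are finite sums of characteristic functions of compact open bisections, with pointwise addition and convolution $(f*g)(\gamma)=\sum_{\alpha\beta=\gamma}f(\alpha)g(\beta)$. A hemiring is congruence-simple if its only congruences are the full relation and the diagonal. *)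

theory Defs
  imports "HOL-Analysis.Analysis"
begin

text \<open>A topological groupoid on (a subset of) type 'a: the arrow space is the
  topological space gtop G (its carrier topspace (gtop G) is the set of arrows),
  units G is the unit space, src/rng the source and range maps, mult the partial
  composition (mult a b defined when src a = rng b) and ginv the inversion.\<close>

record 'a groupoid =
  gtop  :: "'a topology"
  units :: "'a set"
  src   :: "'a \<Rightarrow> 'a"
  rng   :: "'a \<Rightarrow> 'a"
  mult  :: "'a \<Rightarrow> 'a \<Rightarrow> 'a"
  ginv  :: "'a \<Rightarrow> 'a"

abbreviation arrows :: "('a, 'b) groupoid_scheme \<Rightarrow> 'a set" where
  "arrows G \<equiv> topspace (gtop G)"

definition composable :: "('a, 'b) groupoid_scheme \<Rightarrow> ('a \<times> 'a) set" where
  "composable G = {(a, b). a \<in> arrows G \<and> b \<in> arrows G \<and> src G a = rng G b}"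

definition is_groupoid :: "('a, 'b) groupoid_scheme \<Rightarrow> bool" where
  "is_groupoid G \<longleftrightarrow>
     units G \<subseteq> arrows G \<and>
     (\<forall>a \<in> arrows G. src G a \<in> units G \<and> rng G a \<in> units G) \<and>
     (\<forall>u \<in> units G. src G u = u \<and> rng G u = u) \<and>
     (\<forall>(a, b) \<in> composable G. mult G a b \<in> arrows G \<and>
         src G (mult G a b) = src G b \<and> rng G (mult G a b) = rng G a) \<and>
     (\<forall>a \<in> arrows G. \<forall>b \<in> arrows G. \<forall>c \<in> arrows G.
         src G a = rng G b \<longrightarrow> src G b = rng G c \<longrightarrow>
         mult G (mult G a b) c = mult G a (mult G b c)) \<and>
     (\<forall>a \<in> arrows G. mult G (rng G a) a = a \<and> mult G a (src G a) = a) \<and>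
     (\<forall>a \<in> arrows G. ginv G a \<in> arrows G \<and> src G (ginv G a) = rng G a \<and>
         rng G (ginv G a) = src G a \<and>
         mult G a (ginv G a) = rng G a \<and> mult G (ginv G a) a = src G a)"

definition topological_groupoid :: "('a, 'b) groupoid_scheme \<Rightarrow> bool" where
  "topological_groupoid G \<longleftrightarrow>
     is_groupoid G \<and>
     continuous_map (subtopology (prod_topology (gtop G) (gtop G)) (composable G)) (gtop G)
        (\<lambda>(a, b). mult G a b) \<and>
     continuous_map (gtop G) (gtop G) (ginv G)"

definition local_homeo_to_units :: "('a, 'b) groupoid_scheme \<Rightarrow> ('a \<Rightarrow> 'a) \<Rightarrow> bool" where
  "local_homeo_to_units G f \<longleftrightarrow>
     (\<forall>a \<in> arrows G. f a \<in> units G) \<and>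
     (\<forall>a \<in> arrows G. \<exists>V. openin (gtop G) V \<and> a \<in> V \<and>
        openin (subtopology (gtop G) (units G)) (f ` V) \<and>
        homeomorphic_map (subtopology (gtop G) V) (subtopology (gtop G) (f ` V)) f)"

definition totally_disconnected_space :: "'a topology \<Rightarrow> bool" where
  "totally_disconnected_space X \<longleftrightarrow>
     (\<forall>S. connectedin X S \<longrightarrow> (\<exists>x. S \<subseteq> {x}))"

definition ample_groupoid :: "('a, 'b) groupoid_scheme \<Rightarrow> bool" where
  "ample_groupoid G \<longleftrightarrow>
     topological_groupoid G \<and>
     locally_compact_space (subtopology (gtop G) (units G)) \<and>
     Hausdorff_space (subtopology (gtop G) (units G)) \<and>
     totally_disconnected_space (subtopology (gtop G) (units G)) \<and>
     local_homeo_to_units G (src G) \<and> local_homeo_to_units G (rng G)"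

definition invariant_set :: "('a, 'b) groupoid_scheme \<Rightarrow> 'a set \<Rightarrow> bool" where
  "invariant_set G D \<longleftrightarrow> (\<forall>g \<in> arrows G. src G g \<in> D \<longrightarrow> rng G g \<in> D)"

definition minimal_groupoid :: "('a, 'b) groupoid_scheme \<Rightarrow> bool" where
  "minimal_groupoid G \<longleftrightarrow>
     (\<forall>D. openin (subtopology (gtop G) (units G)) D \<and> invariant_set G D \<longrightarrow>
          D = {} \<or> D = units G)"

definition isotropy :: "('a, 'b) groupoid_scheme \<Rightarrow> 'a set" where
  "isotropy G = {g \<in> arrows G. src G g = rng G g}"

definition effective_groupoid :: "('a, 'b) groupoid_scheme \<Rightarrow> bool" where
  "effective_groupoid G \<longleftrightarrow> (gtop G) interior_of (isotropy G) = units G"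

definition regular_open_in :: "'a topology \<Rightarrow> 'a set \<Rightarrow> bool" where
  "regular_open_in X S \<longleftrightarrow> X interior_of (X closure_of S) = S"

definition bisection :: "('a, 'b) groupoid_scheme \<Rightarrow> 'a set \<Rightarrow> bool" where
  "bisection G B \<longleftrightarrow> B \<subseteq> arrows G \<and> inj_on (src G) B \<and> inj_on (rng G) B"

definition compact_open_bisection :: "('a, 'b) groupoid_scheme \<Rightarrow> 'a set \<Rightarrow> bool" where
  "compact_open_bisection G B \<longleftrightarrow>
     compactin (gtop G) B \<and> openin (gtop G) B \<and> bisection G B"

text \<open>Boolean Steinberg algebra: B-valued functions (True = 1, False = 0) that are
  finite sums (= finite disjunctions, as 1 + 1 = 1 in B) of characteristic functions
  of compact open bisections.\<close>
definition steinberg_B :: "('a, 'b) groupoid_scheme \<Rightarrow> ('a \<Rightarrow> bool) set" where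
  "steinberg_B G = {f. \<exists>F. finite F \<and> (\<forall>B \<in> F. compact_open_bisection G B) \<and>
                          f = (\<lambda>g. \<exists>B \<in> F. g \<in> B)}"

definition st_add :: "('a \<Rightarrow> bool) \<Rightarrow> ('a \<Rightarrow> bool) \<Rightarrow> ('a \<Rightarrow> bool)" where
  "st_add f h = (\<lambda>g. f g \<or> h g)"

definition st_conv :: "('a, 'b) groupoid_scheme \<Rightarrow> ('a \<Rightarrow> bool) \<Rightarrow> ('a \<Rightarrow> bool) \<Rightarrow> ('a \<Rightarrow> bool)" where
  "st_conv G f h = (\<lambda>g. \<exists>a b. (a, b) \<in> composable G \<and> mult G a b = g \<and> f a \<and> h b)"

definition hemiring_congruence ::
  "'c set \<Rightarrow> ('c \<Rightarrow> 'c \<Rightarrow> 'c) \<Rightarrow> ('c \<Rightarrow> 'c \<Rightarrow> 'c) \<Rightarrow> ('c \<times> 'c) set \<Rightarrow> bool" where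
  "hemiring_congruence A add mul R \<longleftrightarrow>
     equiv A R \<and>
     (\<forall>(x, y) \<in> R. \<forall>z \<in> A.
        (add x z, add y z) \<in> R \<and> (mul x z, mul y z) \<in> R \<and> (mul z x, mul z y) \<in> R)"

definition congruence_simple ::
  "'c set \<Rightarrow> ('c \<Rightarrow> 'c \<Rightarrow> 'c) \<Rightarrow> ('c \<Rightarrow> 'c \<Rightarrow> 'c) \<Rightarrow> bool" where
  "congruence_simple A add mul \<longleftrightarrow>
     (\<forall>R. hemiring_congruence A add mul R \<longrightarrow> R = A \<times> A \<or> R = Id_on A)"

end

theory Submission
  imports Defs
begin

text \<open>Let R be a congruence other than equality and (a, b) \<in> R with a g but not b g.
  The support of b is compact open, hence regular open, so some nonempty compact open
  bisection W inside the support of a misses the support of b. Multiplying on the left by the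
  indicator of W^-1 gives (p, q) \<in> R with p = 1 on the open set s(W) of units and q = 0 on
  all units. By effectiveness there is a nonempty compact open set V \<subseteq> s(W) of units such that
  no arrow in the support of q has both ends in V; then 1_V q 1_V = 0 while 1_V p 1_V \<ge> 1_V,
  so 1_V is congruent to 0. By minimality the sets r(E), for compact open bisections E with
  s(E) \<subseteq> V, cover the unit space, and 1_r(E) = 1_E 1_V 1_E^-1 is congruent to 0. For a compact
  open bisection B, compactness of s(B) writes 1_B as 1_B times a finite sum of such
  indicators, so every element is congruent to 0 and R is the full relation.\<close>

section \<open>Topological preliminaries\<close>

lemma compact_open_neighbourhood:
  assumes lc: "locally_compact_space Y" and Hd: "Hausdorff_space Y"
    and td: "totally_disconnected_space Y" and W: "openin Y W" "x \<in> W"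
  obtains K where "compactin Y K" "openin Y K" "x \<in> K" "K \<subseteq> W"
proof -
  obtain N C where N: "openin Y N" "compactin Y C" "x \<in> N" "N \<subseteq> C" "C \<subseteq> W"
  proof -
    have "neighbourhood_base_of (compactin Y) Y"
      using lc Hd locally_compact_space_neighbourhood_base by blast
    then show thesis using W that unfolding neighbourhood_base_of by meson
  qed
  have xY: "x \<in> topspace Y" using openin_subset[OF W(1)] W(2) by blast
  obtain y where "connected_component_of_set Y x \<subseteq> {y}"
    using td connectedin_connected_component_of[of Y x]
    unfolding totally_disconnected_space_def by blast
  moreover have "x \<in> connected_component_of_set Y x"
    using xY by (simp add: connected_component_of_refl)
  ultimately have "connected_component_of_set Y x = {x}" by blast
  \<comment> \<open>Points are components, so Wilder's theorem gives a clopen neighbourhood inside N.\<close>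
  then have comp: "{x} \<in> connected_components_of Y"
    by (metis connected_component_in_connected_components_of xY)
  have "compactin Y {x}" "{x} \<subseteq> N" using xY N(3) by auto
  then obtain K L where K: "openin Y K" "openin Y L" "disjnt K L" "K \<union> L = topspace Y"
      "{x} \<subseteq> K" "K \<subseteq> N"
    using wilder_locally_compact_component_thm[OF lc Hd comp _ N(1)] by blast
  have "K = topspace Y - L" using K(3,4) openin_subset[OF K(1)] by (auto simp: disjnt_def)
  then have "closedin Y K" using K(2) by (simp add: closedin_diff)
  then have "compactin Y K" using closed_compactin[OF N(2)] N(4) K(6) by blast
  then show thesis using that K N by blast
qed

lemma local_homeo_to_unitsE:
  assumes "local_homeo_to_units G f" "openin (gtop G) (units G)" "a \<in> arrows G"
  obtains V where "openin (gtop G) V" "a \<in> V" "openin (gtop G) (f ` V)"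
    "homeomorphic_map (subtopology (gtop G) V) (subtopology (gtop G) (f ` V)) f"
proof -
  obtain V where V: "openin (gtop G) V" "a \<in> V" "openin (subtopology (gtop G) (units G)) (f ` V)"
    "homeomorphic_map (subtopology (gtop G) V) (subtopology (gtop G) (f ` V)) f"
    using assms(1,3) unfolding local_homeo_to_units_def by blast
  then show thesis using that openin_trans_full[OF V(3) assms(2)] by blast
qed

lemma local_homeo_to_units_continuous:
  assumes lh: "local_homeo_to_units G f"
  shows "continuous_map (gtop G) (gtop G) f"
proof -
  define \<V> where "\<V> = {V. openin (gtop G) V \<and>
    homeomorphic_map (subtopology (gtop G) V) (subtopology (gtop G) (f ` V)) f}"
  show ?thesis
  proof (rule pasting_lemma[where I = \<V> and T = "\<lambda>V. V" and f = "\<lambda>_. f"])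
    show "openin (gtop G) V" if "V \<in> \<V>" for V using that by (simp add: \<V>_def)
    show "continuous_map (subtopology (gtop G) V) (gtop G) f" if "V \<in> \<V>" for V
    proof -
      have "continuous_map (subtopology (gtop G) V) (subtopology (gtop G) (f ` V)) f"
        using that by (simp add: \<V>_def homeomorphic_imp_continuous_map)
      then show ?thesis by (simp add: continuous_map_in_subtopology)
    qed
    show "\<exists>V. V \<in> \<V> \<and> a \<in> V \<and> f a = f a" if "a \<in> arrows G" for a
      using lh that unfolding local_homeo_to_units_def \<V>_def by blast
  qed simp
qed

lemma local_homeo_to_units_open_image:
  assumes lh: "local_homeo_to_units G f" and units: "openin (gtop G) (units G)"
    and W: "openin (gtop G) W"
  shows "openin (gtop G) (f ` W)"
  unfolding openin_subopen[of _ "f ` W"]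
proof
  fix y assume "y \<in> f ` W"
  then obtain a where a: "a \<in> W" "y = f a" by blast
  then obtain V where V: "openin (gtop G) V" "a \<in> V" "openin (gtop G) (f ` V)"
    and h: "homeomorphic_map (subtopology (gtop G) V) (subtopology (gtop G) (f ` V)) f"
    using local_homeo_to_unitsE[OF lh units] W openin_subset by blast
  have "openin (subtopology (gtop G) V) (W \<inter> V)"
    using W V by (simp add: openin_open_subtopology openin_Int)
  moreover have "W \<inter> V \<subseteq> topspace (subtopology (gtop G) V)"
    using openin_subset[OF V(1)] by auto
  ultimately have "openin (subtopology (gtop G) (f ` V)) (f ` (W \<inter> V))"
    using homeomorphic_map_openness[OF h] by blast
  then have "openin (gtop G) (f ` (W \<inter> V))" using openin_trans_full V(3) by blast
  then show "\<exists>T. openin (gtop G) T \<and> y \<in> T \<and> T \<subseteq> f ` W"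
    using a V by blast
qed

section \<open>Groupoid algebra and convolution\<close>

abbreviation (input) charf :: "'a set \<Rightarrow> 'a \<Rightarrow> bool" where
  "charf B \<equiv> \<lambda>g. g \<in> B"

lemma st_conv_False_left [simp]: "st_conv G (\<lambda>_. False) f = (\<lambda>_. False)"
  by (simp add: st_conv_def)

lemma st_conv_False_right [simp]: "st_conv G f (\<lambda>_. False) = (\<lambda>_. False)"
  by (simp add: st_conv_def)

locale algebraic_groupoid =
  fixes G :: "('a, 'b) groupoid_scheme"
  assumes groupoid: "is_groupoid G"
begin

abbreviation "s \<equiv> src G"
abbreviation "r \<equiv> rng G"
abbreviation "m \<equiv> mult G"
abbreviation "i \<equiv> ginv G"
abbreviation "A \<equiv> arrows G"
abbreviation "U \<equiv> units G"

lemma units_subset_arrows: "U \<subseteq> A"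
  using groupoid unfolding is_groupoid_def by blast

lemma src_in_units [simp]: "a \<in> A \<Longrightarrow> s a \<in> U"
  and rng_in_units [simp]: "a \<in> A \<Longrightarrow> r a \<in> U"
  and src_unit [simp]: "u \<in> U \<Longrightarrow> s u = u"
  and rng_unit [simp]: "u \<in> U \<Longrightarrow> r u = u"
  using groupoid unfolding is_groupoid_def by blast+

lemma src_in_arrows [simp]: "a \<in> A \<Longrightarrow> s a \<in> A"
  and rng_in_arrows [simp]: "a \<in> A \<Longrightarrow> r a \<in> A"
  using units_subset_arrows by auto

lemma mult_in_arrows [simp]: "a \<in> A \<Longrightarrow> b \<in> A \<Longrightarrow> s a = r b \<Longrightarrow> m a b \<in> A"
  and src_mult [simp]: "a \<in> A \<Longrightarrow> b \<in> A \<Longrightarrow> s a = r b \<Longrightarrow> s (m a b) = s b"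
  and rng_mult [simp]: "a \<in> A \<Longrightarrow> b \<in> A \<Longrightarrow> s a = r b \<Longrightarrow> r (m a b) = r a"
  using groupoid unfolding is_groupoid_def composable_def by blast+

lemma mult_assoc:
  "a \<in> A \<Longrightarrow> b \<in> A \<Longrightarrow> c \<in> A \<Longrightarrow> s a = r b \<Longrightarrow> s b = r c \<Longrightarrow>
    m (m a b) c = m a (m b c)"
  using groupoid unfolding is_groupoid_def by blast

lemma mult_rng_left [simp]: "a \<in> A \<Longrightarrow> m (r a) a = a"
  and mult_src_right [simp]: "a \<in> A \<Longrightarrow> m a (s a) = a"
  and inv_in_arrows [simp]: "a \<in> A \<Longrightarrow> i a \<in> A"
  and src_inv [simp]: "a \<in> A \<Longrightarrow> s (i a) = r a"
  and rng_inv [simp]: "a \<in> A \<Longrightarrow> r (i a) = s a"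
  and mult_inv_right [simp]: "a \<in> A \<Longrightarrow> m a (i a) = r a"
  and mult_inv_left [simp]: "a \<in> A \<Longrightarrow> m (i a) a = s a"
  using groupoid unfolding is_groupoid_def by blast+

lemma composable_iff [simp]: "(a, b) \<in> composable G \<longleftrightarrow> a \<in> A \<and> b \<in> A \<and> s a = r b"
  by (simp add: composable_def)

lemma inv_inv [simp]:
  assumes a: "a \<in> A"
  shows "i (i a) = a"
proof -
  have "i (i a) = m (r (i (i a))) (i (i a))" by (rule mult_rng_left[symmetric]) (simp add: a)
  also have "\<dots> = m (m a (i a)) (i (i a))" using a by simp
  also have "\<dots> = m a (m (i a) (i (i a)))" using a by (intro mult_assoc) auto
  also have "\<dots> = a" using a by simp
  finally show ?thesis .
qed

lemma eq_if_inv_mult_in_units: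
  assumes w: "w \<in> A" and c: "c \<in> A" and rc: "r c = r w" and u: "m (i w) c \<in> U"
  shows "c = w"
proof -
  have "m (i w) c = s w"
    using rng_unit[OF u] w c rc by simp
  have "c = m (r c) c" using c by simp
  also have "\<dots> = m (m w (i w)) c" using w rc by simp
  also have "\<dots> = m w (m (i w) c)" using w c rc by (intro mult_assoc) auto
  also have "\<dots> = w" using \<open>m (i w) c = s w\<close> w by simp
  finally show ?thesis .
qed

lemma st_conv_unit_support_left:
  assumes S: "\<And>g. S g \<Longrightarrow> g \<in> U" and B: "B \<subseteq> A" and cover: "\<And>b. b \<in> B \<Longrightarrow> S (r b)"
  shows "st_conv G S (charf B) = charf B"
proof (intro ext iffI)
  fix g
  assume "st_conv G S (charf B) g"
  then obtain u b where "(u, b) \<in> composable G" "m u b = g" "S u" "b \<in> B"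
    unfolding st_conv_def by blast
  moreover have "u = r b" using calculation S[of u] by simp
  ultimately show "g \<in> B" using B by auto
next
  fix g
  assume g: "g \<in> B"
  then have "(r g, g) \<in> composable G" "m (r g) g = g" using B by auto
  then show "st_conv G S (charf B) g" unfolding st_conv_def using g cover by blast
qed

lemma st_conv_unit_support_right:
  assumes S: "\<And>g. S g \<Longrightarrow> g \<in> U" and B: "B \<subseteq> A" and cover: "\<And>b. b \<in> B \<Longrightarrow> S (s b)"
  shows "st_conv G (charf B) S = charf B"
proof (intro ext iffI)
  fix g
  assume "st_conv G (charf B) S g"
  then obtain b u where "(b, u) \<in> composable G" "m b u = g" "b \<in> B" "S u"
    unfolding st_conv_def by blast
  moreover have "u = s b" using calculation S[of u] by simp
  ultimately show "g \<in> B" using B by auto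
next
  fix g
  assume g: "g \<in> B"
  then have "(g, s g) \<in> composable G" "m g (s g) = g" using B by auto
  then show "st_conv G (charf B) S g" unfolding st_conv_def using g cover by blast
qed

lemma st_conv_bisection_inv:
  assumes E: "E \<subseteq> A" "inj_on s E"
  shows "st_conv G (charf E) (charf (i ` E)) = charf (r ` E)"
proof (intro ext iffI)
  fix g
  assume "st_conv G (charf E) (charf (i ` E)) g"
  then obtain e e' where e: "(e, i e') \<in> composable G" "m e (i e') = g" "e \<in> E" "e' \<in> E"
    unfolding st_conv_def by blast
  then have "s e = s e'" using E(1) by auto
  then have "e = e'" using E(2) e(3,4) by (simp add: inj_on_eq_iff)
  then show "g \<in> r ` E" using e E(1) by auto
next
  fix g
  assume "g \<in> r ` E"
  then obtain e where e: "e \<in> E" "g = r e" by blast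
  then have "(e, i e) \<in> composable G" "m e (i e) = g" using E(1) by auto
  then show "st_conv G (charf E) (charf (i ` E)) g" unfolding st_conv_def using e by blast
qed

lemma st_conv_inv_on_src:
  assumes "W \<subseteq> A" "\<And>w. w \<in> W \<Longrightarrow> f w" "w \<in> W"
  shows "st_conv G (charf (i ` W)) f (s w)"
proof -
  have "(i w, w) \<in> composable G" "m (i w) w = s w" using assms by auto
  then show ?thesis unfolding st_conv_def using assms by blast
qed

lemma st_conv_inv_off_units:
  assumes W: "W \<subseteq> A" and f: "\<And>g. f g \<Longrightarrow> g \<in> A" "\<And>w. w \<in> W \<Longrightarrow> \<not> f w"
    and u: "u \<in> U"
  shows "\<not> st_conv G (charf (i ` W)) f u"
proof
  assume "st_conv G (charf (i ` W)) f u"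
  then obtain w c where wc: "(i w, c) \<in> composable G" "m (i w) c = u" "w \<in> W" "f c"
    unfolding st_conv_def by blast
  moreover have "w \<in> A" "c \<in> A" using W f(1) wc by auto
  ultimately have "c = w" using eq_if_inv_mult_in_units u by simp
  then show False using f(2) wc by blast
qed

lemma st_conv_unit_sandwich_ge:
  assumes "V \<subseteq> U" "\<And>v. v \<in> V \<Longrightarrow> p v" "v \<in> V"
  shows "st_conv G (charf V) (st_conv G p (charf V)) v"
proof -
  have "v \<in> U" "v \<in> A" using assms(1,3) units_subset_arrows by blast+
  then have "(v, v) \<in> composable G" "m v v = v"
    using mult_rng_left[of v] by simp_all
  then show ?thesis unfolding st_conv_def using assms(2,3) by blast
qed

lemma st_conv_unit_sandwich_zero:
  assumes V: "V \<subseteq> U" and q: "\<And>g. q g \<Longrightarrow> g \<in> A" "\<And>e. q e \<Longrightarrow> s e \<in> V \<Longrightarrow> r e \<notin> V"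
  shows "st_conv G (charf V) (st_conv G q (charf V)) = (\<lambda>_. False)"
proof (intro ext iffI)
  fix g
  assume "st_conv G (charf V) (st_conv G q (charf V)) g"
  then obtain v e v' where "(v, m e v') \<in> composable G" "v \<in> V" "(e, v') \<in> composable G"
      "q e" "v' \<in> V"
    unfolding st_conv_def by blast
  moreover have "v \<in> U" "v' \<in> U" using V calculation by auto
  ultimately have "s e \<in> V" "r e \<in> V" by auto
  then show False using q(2) \<open>q e\<close> by blast
qed simp

end

section \<open>Ample groupoids with open unit space\<close>

locale ample_open_units =
  fixes G :: "('a, 'b) groupoid_scheme"
  assumes ample: "ample_groupoid G"
    and units_open: "openin (gtop G) (units G)"

sublocale ample_open_units \<subseteq> algebraic_groupoid
proof
  show "is_groupoid G"
    using ample unfolding ample_groupoid_def topological_groupoid_def by blast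
qed

context ample_open_units
begin

abbreviation "X \<equiv> gtop G"

lemma inv_continuous: "continuous_map X X i"
  using ample unfolding ample_groupoid_def topological_groupoid_def by blast

lemma src_local_homeo: "local_homeo_to_units G s"
  and rng_local_homeo: "local_homeo_to_units G r"
  using ample unfolding ample_groupoid_def by blast+

lemma src_continuous: "continuous_map X X s"
  and rng_continuous: "continuous_map X X r"
  using src_local_homeo rng_local_homeo by (simp_all add: local_homeo_to_units_continuous)

lemma src_open_image: "openin X W \<Longrightarrow> openin X (s ` W)"
  and rng_open_image: "openin X W \<Longrightarrow> openin X (r ` W)"
  using local_homeo_to_units_open_image units_open src_local_homeo rng_local_homeo by blast+

lemma openin_src_preimage: "openin X Q \<Longrightarrow> openin X {a \<in> A. s a \<in> Q}"
  and openin_rng_preimage: "openin X Q \<Longrightarrow> openin X {a \<in> A. r a \<in> Q}"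
  using openin_continuous_map_preimage src_continuous rng_continuous by blast+

lemma compact_open_unit_neighbourhood:
  assumes "openin X W" "x \<in> W" "x \<in> U"
  obtains K where "compactin X K" "openin X K" "x \<in> K" "K \<subseteq> W" "K \<subseteq> U"
proof -
  let ?Y = "subtopology X U"
  have "locally_compact_space ?Y" "Hausdorff_space ?Y" "totally_disconnected_space ?Y"
    using ample unfolding ample_groupoid_def by blast+
  moreover have "openin ?Y (W \<inter> U)"
    using assms(1) units_open by (simp add: openin_open_subtopology openin_Int)
  ultimately obtain K where K: "compactin ?Y K" "openin ?Y K" "x \<in> K" "K \<subseteq> W \<inter> U"
    using compact_open_neighbourhood assms(2,3) by (metis IntI)
  then show thesis
    using that openin_trans_full[OF K(2) units_open] compactin_subtopology by blast
qed

lemma units_separation: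
  assumes "p \<in> U" "q \<in> U" "p \<noteq> q"
  obtains P Q where "openin X P" "openin X Q" "p \<in> P" "q \<in> Q" "P \<inter> Q = {}"
proof -
  have "Hausdorff_space (subtopology X U)"
    using ample unfolding ample_groupoid_def by blast
  moreover have "p \<in> topspace (subtopology X U)" "q \<in> topspace (subtopology X U)"
    using assms units_subset_arrows by auto
  ultimately obtain P Q where PQ: "openin (subtopology X U) P" "openin (subtopology X U) Q"
      "p \<in> P" "q \<in> Q" "disjnt P Q"
    using assms(3) unfolding Hausdorff_space_def by blast
  then show thesis
    using that openin_trans_full[OF _ units_open] unfolding disjnt_def by blast
qed

lemma compact_open_bisection_of_units:
  assumes "V \<subseteq> U" "compactin X V" "openin X V"
  shows "compact_open_bisection G V"
  unfolding compact_open_bisection_def bisection_def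
proof (intro conjI)
  show "inj_on s V" "inj_on r V" using assms(1) by (auto intro!: inj_onI simp: subset_iff)
qed (use assms units_subset_arrows in auto)

lemma compact_open_bisection_inv:
  assumes "compact_open_bisection G W"
  shows "compact_open_bisection G (i ` W)"
proof -
  have W: "compactin X W" "openin X W" "W \<subseteq> A" "inj_on s W" "inj_on r W"
    using assms unfolding compact_open_bisection_def bisection_def by auto
  have "i ` W = {a \<in> A. i a \<in> W}"
    using W(3) by (auto intro: rev_image_eqI[where x = "i _"])
  then have "openin X (i ` W)"
    using openin_continuous_map_preimage[OF inv_continuous W(2)] by simp
  moreover have "compactin X (i ` W)" using image_compactin[OF W(1) inv_continuous] .
  moreover have "inj_on s (i ` W)" "inj_on r (i ` W)"
    using W(3-5) by (auto simp: inj_on_def subset_iff)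
  ultimately show ?thesis
    using W(3) unfolding compact_open_bisection_def bisection_def by auto
qed

lemma compact_open_bisection_base:
  assumes Ob: "openin X Ob" and g: "g \<in> Ob"
  obtains W where "compact_open_bisection G W" "g \<in> W" "W \<subseteq> Ob"
proof -
  have gA: "g \<in> A" using openin_subset[OF Ob] g by blast
  obtain Vs where Vs: "openin X Vs" "g \<in> Vs"
    and hs: "homeomorphic_map (subtopology X Vs) (subtopology X (s ` Vs)) s"
    using local_homeo_to_unitsE[OF src_local_homeo units_open gA] by blast
  obtain Vr where Vr: "openin X Vr" "g \<in> Vr"
    and hr: "homeomorphic_map (subtopology X Vr) (subtopology X (r ` Vr)) r"
    using local_homeo_to_unitsE[OF rng_local_homeo units_open gA] by blast
  have VA: "Vs \<subseteq> A" "Vr \<subseteq> A" using openin_subset[OF Vs(1)] openin_subset[OF Vr(1)] .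
  have inj: "inj_on s Vs" "inj_on r Vr"
    using hs hr VA unfolding homeomorphic_map_def by (simp_all add: Int_absorb1)
  define O' where "O' = Ob \<inter> Vs \<inter> Vr"
  have O'o: "openin X O'" unfolding O'_def using Ob Vs(1) Vr(1) by (intro openin_Int)
  have O': "g \<in> O'" "O' \<subseteq> Vs" "O' \<subseteq> Vr" using g Vs(2) Vr(2) unfolding O'_def by auto
  have "s g \<in> s ` O'" using O'(1) by blast
  then obtain K where K: "compactin X K" "openin X K" "s g \<in> K" "K \<subseteq> s ` O'" "K \<subseteq> U"
    by (rule compact_open_unit_neighbourhood[OF src_open_image[OF O'o] _ src_in_units[OF gA]])
  define W where "W = {a \<in> O'. s a \<in> K}"
  have "W = O' \<inter> {a \<in> A. s a \<in> K}" using O'(2) VA(1) unfolding W_def by auto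
  then have "openin X W" using O'o openin_src_preimage[OF K(2)] by auto
  moreover have "compactin X W"
  proof -
    have "s ` W = K" using K(4) by (auto simp: W_def)
    moreover have "compactin (subtopology X (s ` Vs)) K"
      using K(1,4) O'(2) by (auto simp: compactin_subtopology)
    moreover have "W \<subseteq> topspace (subtopology X Vs)" using O'(2) VA(1) by (auto simp: W_def)
    ultimately have "compactin (subtopology X Vs) W"
      using homeomorphic_map_compactness[OF hs] by blast
    then show ?thesis by (simp add: compactin_subtopology)
  qed
  moreover have "W \<subseteq> O'" by (auto simp: W_def)
  then have "bisection G W"
    unfolding bisection_def using O'(2,3) VA inj by (meson inj_on_subset subset_trans)
  moreover have "g \<in> W" using O'(1) K(3) by (simp add: W_def)
  moreover have "W \<subseteq> Ob" using \<open>W \<subseteq> O'\<close> by (auto simp: O'_def)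
  ultimately show thesis using that unfolding compact_open_bisection_def by blast
qed

lemma effective_avoid_bisection:
  assumes eff: "effective_groupoid G"
    and D: "openin X D" "inj_on s D" "D \<inter> U = {}"
    and N: "openin X N" "N \<noteq> {}" "N \<subseteq> U"
  obtains N' where "openin X N'" "N' \<noteq> {}" "N' \<subseteq> N" "\<And>d. d \<in> D \<Longrightarrow> s d \<in> N' \<Longrightarrow> r d \<notin> N'"
proof (cases "\<exists>d \<in> D. s d \<in> N \<and> r d \<in> N")
  case False
  then show thesis using that[OF N(1,2)] by blast
next
  case True
  define D' where "D' = D \<inter> {a \<in> A. s a \<in> N} \<inter> {a \<in> A. r a \<in> N}"
  have D'o: "openin X D'"
    unfolding D'_def by (intro openin_Int D(1) openin_src_preimage[OF N(1)] openin_rng_preimage[OF N(1)])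
  have "D' \<noteq> {}" using True openin_subset[OF D(1)] unfolding D'_def by blast
  moreover have "D' \<subseteq> D" unfolding D'_def by blast
  ultimately have "\<not> D' \<subseteq> U" using D(3) by blast
  then have "\<not> D' \<subseteq> isotropy G"
    using interior_of_maximal[OF _ D'o] eff unfolding effective_groupoid_def by blast
  then obtain d where d: "d \<in> D'" "d \<notin> isotropy G" by blast
  have dA: "d \<in> A" using d(1) unfolding D'_def by blast
  then have sr: "s d \<noteq> r d" using d(2) unfolding isotropy_def by blast
  \<comment> \<open>Separate the ends of d; the sources of arrows of D' ending near r d then form N'.\<close>
  obtain P Q where PQ: "openin X P" "openin X Q" "s d \<in> P" "r d \<in> Q" "P \<inter> Q = {}"
    using units_separation[OF src_in_units[OF dA] rng_in_units[OF dA] sr] by blast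
  define N' where "N' = N \<inter> P \<inter> s ` (D' \<inter> {a \<in> A. r a \<in> Q})"
  have "openin X (s ` (D' \<inter> {a \<in> A. r a \<in> Q}))"
    by (intro src_open_image openin_Int D'o openin_rng_preimage[OF PQ(2)])
  then have "openin X N'" unfolding N'_def by (intro openin_Int N(1) PQ(1))
  moreover have "s d \<in> N'"
    using d(1) dA PQ(3,4) unfolding N'_def D'_def by blast
  moreover have "r e \<notin> N'" if e: "e \<in> D" "s e \<in> N'" for e
  proof
    assume "r e \<in> N'"
    obtain e' where e': "e' \<in> D'" "r e' \<in> Q" "s e = s e'" using e(2) unfolding N'_def by blast
    then have "e' \<in> D" unfolding D'_def by blast
    then have "e = e'" using D(2) e(1) e'(3) by (simp add: inj_on_eq_iff)
    then show False using e'(2) \<open>r e \<in> N'\<close> PQ(5) unfolding N'_def by blast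
  qed
  moreover have "N' \<subseteq> N" unfolding N'_def by blast
  ultimately show thesis using that by blast
qed

lemma effective_avoid_bisections:
  assumes eff: "effective_groupoid G"
    and \<D>: "finite \<D>" "\<And>D. D \<in> \<D> \<Longrightarrow> openin X D \<and> inj_on s D \<and> D \<inter> U = {}"
    and N: "openin X N" "N \<noteq> {}" "N \<subseteq> U"
  shows "\<exists>N'. openin X N' \<and> N' \<noteq> {} \<and> N' \<subseteq> N \<and> (\<forall>d \<in> \<Union>\<D>. s d \<in> N' \<longrightarrow> r d \<notin> N')"
  using \<D>
proof (induction rule: finite_induct)
  case empty
  then show ?case using N by blast
next
  case (insert D \<D>)
  then obtain N1 where N1: "openin X N1" "N1 \<noteq> {}" "N1 \<subseteq> N"
      "\<forall>d \<in> \<Union>\<D>. s d \<in> N1 \<longrightarrow> r d \<notin> N1"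
    by blast
  have "openin X D" "inj_on s D" "D \<inter> U = {}" using insert.prems by blast+
  moreover have "N1 \<subseteq> U" using N1(3) N(3) by blast
  ultimately obtain N2 where N2: "openin X N2" "N2 \<noteq> {}" "N2 \<subseteq> N1"
      "\<And>d. d \<in> D \<Longrightarrow> s d \<in> N2 \<Longrightarrow> r d \<notin> N2"
    using effective_avoid_bisection[OF eff _ _ _ N1(1,2)] by blast
  have "\<forall>d \<in> \<Union>(insert D \<D>). s d \<in> N2 \<longrightarrow> r d \<notin> N2" using N1(4) N2(3,4) by blast
  then show ?case using N1(3) N2(1-3) by blast
qed

lemma regular_open_avoid:
  assumes reg: "regular_open_in X K" and B: "openin X B" "\<not> B \<subseteq> K"
  obtains W where "compact_open_bisection G W" "W \<noteq> {}" "W \<subseteq> B" "W \<inter> K = {}"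
proof -
  have "\<not> B \<subseteq> X closure_of K"
  proof
    assume "B \<subseteq> X closure_of K"
    then have "B \<subseteq> X interior_of (X closure_of K)" using interior_of_maximal[OF _ B(1)] by blast
    then show False using reg B(2) unfolding regular_open_in_def by simp
  qed
  then obtain h where h: "h \<in> B - X closure_of K" by blast
  have "openin X (B - X closure_of K)" using B(1) closedin_closure_of by (rule openin_diff)
  then obtain W where W: "compact_open_bisection G W" "h \<in> W" "W \<subseteq> B - X closure_of K"
    using h by (rule compact_open_bisection_base)
  have "K \<subseteq> topspace X" using reg unfolding regular_open_in_def by (metis interior_of_subset_topspace)
  then have "K \<subseteq> X closure_of K" by (rule closure_of_subset)
  then show thesis using that W by blast
qed

lemma minimal_rng_of_src_preimage:
  assumes mini: "minimal_groupoid G" and V: "openin X V" "V \<subseteq> U" "V \<noteq> {}"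
  shows "r ` {a \<in> A. s a \<in> V} = U"
proof -
  let ?O = "r ` {a \<in> A. s a \<in> V}"
  have "openin X ?O" using rng_open_image[OF openin_src_preimage[OF V(1)]] .
  moreover have "?O \<subseteq> U" by auto
  ultimately have "openin (subtopology X U) ?O" using openin_open_subtopology[OF units_open] by blast
  moreover have "invariant_set G ?O"
    unfolding invariant_set_def
  proof (intro ballI impI)
    fix g assume g: "g \<in> A" "s g \<in> ?O"
    then obtain c where c: "c \<in> A" "s c \<in> V" "s g = r c" by blast
    then have "m g c \<in> A" "s (m g c) = s c" "r (m g c) = r g" using g(1) by simp_all
    then show "r g \<in> ?O" using c(2) by (metis (mono_tags, lifting) image_eqI mem_Collect_eq)
  qed
  moreover have "?O \<noteq> {}"
  proof -
    obtain v where "v \<in> V" using V(3) by blast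
    then have "v \<in> {a \<in> A. s a \<in> V}" "r v = v" using V(2) units_subset_arrows by auto
    then show ?thesis by (metis empty_iff image_eqI)
  qed
  ultimately show ?thesis using mini unfolding minimal_groupoid_def by blast
qed

end

section \<open>Congruences on the Boolean Steinberg algebra\<close>

lemma charf_in_steinberg_B: "compact_open_bisection G B \<Longrightarrow> charf B \<in> steinberg_B G"
  unfolding steinberg_B_def by (rule CollectI, rule exI[of _ "{B}"]) auto

lemma False_in_steinberg_B: "(\<lambda>_. False) \<in> steinberg_B G"
  unfolding steinberg_B_def by (rule CollectI, rule exI[of _ "{}"]) auto

lemma steinberg_BE:
  assumes "f \<in> steinberg_B G"
  obtains F where "finite F" "\<And>B. B \<in> F \<Longrightarrow> compact_open_bisection G B" "f = charf (\<Union>F)"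
  using assms unfolding steinberg_B_def by auto

lemma steinberg_B_arrows: "f \<in> steinberg_B G \<Longrightarrow> f g \<Longrightarrow> g \<in> arrows G"
  unfolding steinberg_B_def compact_open_bisection_def bisection_def by blast

context
  fixes A :: "'c set" and add mul :: "'c \<Rightarrow> 'c \<Rightarrow> 'c" and R :: "('c \<times> 'c) set"
  assumes cong: "hemiring_congruence A add mul R"
begin

lemma congruence_in_carrier: "(x, y) \<in> R \<Longrightarrow> x \<in> A \<and> y \<in> A"
  and congruence_refl: "x \<in> A \<Longrightarrow> (x, x) \<in> R"
  and congruence_sym: "(x, y) \<in> R \<Longrightarrow> (y, x) \<in> R"
  and congruence_trans: "(x, y) \<in> R \<Longrightarrow> (y, z) \<in> R \<Longrightarrow> (x, z) \<in> R"
  and congruence_add: "(x, y) \<in> R \<Longrightarrow> z \<in> A \<Longrightarrow> (add x z, add y z) \<in> R"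
  and congruence_mul_right: "(x, y) \<in> R \<Longrightarrow> z \<in> A \<Longrightarrow> (mul x z, mul y z) \<in> R"
  and congruence_mul_left: "(x, y) \<in> R \<Longrightarrow> z \<in> A \<Longrightarrow> (mul z x, mul z y) \<in> R"
  using cong unfolding hemiring_congruence_def equiv_def refl_on_def sym_def trans_def
  by blast+

end

locale steinberg_congruence = ample_open_units +
  fixes R :: "(('a \<Rightarrow> bool) \<times> ('a \<Rightarrow> bool)) set"
  assumes congruence: "hemiring_congruence (steinberg_B G) st_add (st_conv G) R"
begin

lemmas cong_in_carrier = congruence_in_carrier[OF congruence]
  and cong_refl = congruence_refl[OF congruence]
  and cong_sym = congruence_sym[OF congruence]
  and cong_trans = congruence_trans[OF congruence]
  and cong_add = congruence_add[OF congruence]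
  and cong_conv_right = congruence_mul_right[OF congruence]
  and cong_conv_left = congruence_mul_left[OF congruence]

lemma cong_Union_zero:
  assumes "finite F" "\<And>B. B \<in> F \<Longrightarrow> (charf B, \<lambda>_. False) \<in> R"
  shows "(charf (\<Union>F), \<lambda>_. False) \<in> R"
  using assms
proof (induction rule: finite_induct)
  case empty
  then show ?case using cong_refl[OF False_in_steinberg_B] by simp
next
  case (insert B F)
  then have IH: "(charf (\<Union>F), \<lambda>_. False) \<in> R" and B: "(charf B, \<lambda>_. False) \<in> R" by simp_all
  have "(st_add (charf B) (charf (\<Union>F)), st_add (\<lambda>_. False) (charf (\<Union>F))) \<in> R"
    using cong_add[OF B] cong_in_carrier[OF IH] by blast
  then have "(charf (\<Union>(insert B F)), charf (\<Union>F)) \<in> R" by (simp add: st_add_def)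
  then show ?case using IH by (rule cong_trans)
qed

lemma exists_separating_pair:
  assumes "R \<noteq> Id_on (steinberg_B G)"
  obtains a b g where "(a, b) \<in> R" "a g" "\<not> b g"
proof -
  have "Id_on (steinberg_B G) \<subseteq> R" using cong_refl by auto
  then obtain x y where xy: "(x, y) \<in> R" "(x, y) \<notin> Id_on (steinberg_B G)"
    using assms by auto
  then have "x \<noteq> y" using cong_in_carrier[OF xy(1)] by auto
  then obtain g where "x g \<noteq> y g" by blast
  then show thesis using that[OF xy(1)] that[OF cong_sym[OF xy(1)]] by (cases "x g") simp_all
qed

lemma cong_zero_rng_translate:
  assumes V: "V \<subseteq> U" "(charf V, \<lambda>_. False) \<in> R"
    and E: "compact_open_bisection G E" "s ` E \<subseteq> V"
  shows "(charf (r ` E), \<lambda>_. False) \<in> R"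
proof -
  have EA: "E \<subseteq> A" and inj: "inj_on s E"
    using E(1) unfolding compact_open_bisection_def bisection_def by blast+
  have "(st_conv G (charf V) (charf (i ` E)), st_conv G (\<lambda>_. False) (charf (i ` E))) \<in> R"
    using cong_conv_right[OF V(2) charf_in_steinberg_B[OF compact_open_bisection_inv[OF E(1)]]] .
  moreover have "st_conv G (charf V) (charf (i ` E)) = charf (i ` E)"
    by (rule st_conv_unit_support_left) (use V(1) EA E(2) in \<open>auto simp: image_subset_iff\<close>)
  ultimately have "(charf (i ` E), \<lambda>_. False) \<in> R" by simp
  from cong_conv_left[OF this charf_in_steinberg_B[OF E(1)]]
  show ?thesis by (simp add: st_conv_bisection_inv[OF EA inj])
qed

lemma cong_zero_bisection:
  assumes mini: "minimal_groupoid G"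
    and V: "V \<subseteq> U" "V \<noteq> {}" "openin X V" "(charf V, \<lambda>_. False) \<in> R"
    and B: "compact_open_bisection G B"
  shows "(charf B, \<lambda>_. False) \<in> R"
proof -
  define \<T> where "\<T> = {r ` E | E. compact_open_bisection G E \<and> s ` E \<subseteq> V}"
  have cover: "U \<subseteq> \<Union>\<T>"
  proof
    fix u assume "u \<in> U"
    then obtain c where c: "c \<in> {a \<in> A. s a \<in> V}" "u = r c"
      using minimal_rng_of_src_preimage[OF mini V(3,1,2)] by blast
    obtain E where "compact_open_bisection G E" "c \<in> E" "E \<subseteq> {a \<in> A. s a \<in> V}"
      using compact_open_bisection_base[OF openin_src_preimage[OF V(3)] c(1)] by blast
    then show "u \<in> \<Union>\<T>" using c(2) unfolding \<T>_def by blast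
  qed
  have BA: "B \<subseteq> A" and Bc: "compactin X B"
    using B unfolding compact_open_bisection_def bisection_def by blast+
  have "compactin X (s ` B)" using image_compactin[OF Bc src_continuous] .
  moreover have "\<forall>T \<in> \<T>. openin X T"
    unfolding \<T>_def compact_open_bisection_def using rng_open_image by blast
  moreover have "s ` B \<subseteq> \<Union>\<T>" using BA cover src_in_units by blast
  ultimately obtain \<F> where \<F>: "finite \<F>" "\<F> \<subseteq> \<T>" "s ` B \<subseteq> \<Union>\<F>"
    unfolding compactin_def by meson
  have "(charf (\<Union>\<F>), \<lambda>_. False) \<in> R"
  proof (rule cong_Union_zero[OF \<F>(1)])
    fix T assume "T \<in> \<F>"
    then obtain E where "T = r ` E" "compact_open_bisection G E" "s ` E \<subseteq> V"
      using \<F>(2) unfolding \<T>_def by blast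
    then show "(charf T, \<lambda>_. False) \<in> R" using cong_zero_rng_translate V(1,4) by blast
  qed
  from cong_conv_left[OF this charf_in_steinberg_B[OF B]]
  have "(st_conv G (charf B) (charf (\<Union>\<F>)), \<lambda>_. False) \<in> R" by simp
  moreover have "\<Union>\<T> \<subseteq> U"
    unfolding \<T>_def compact_open_bisection_def bisection_def by (auto simp: subset_iff)
  then have "\<Union>\<F> \<subseteq> U" using \<F>(2) by blast
  then have "st_conv G (charf B) (charf (\<Union>\<F>)) = charf B"
    by (intro st_conv_unit_support_right) (use BA \<F>(3) in auto)
  ultimately show ?thesis by simp
qed

lemma full_if_unit_zero:
  assumes mini: "minimal_groupoid G"
    and V: "V \<subseteq> U" "V \<noteq> {}" "openin X V" "(charf V, \<lambda>_. False) \<in> R"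
  shows "R = steinberg_B G \<times> steinberg_B G"
proof
  show "R \<subseteq> steinberg_B G \<times> steinberg_B G" using cong_in_carrier by auto
  have zero: "(f, \<lambda>_. False) \<in> R" if f: "f \<in> steinberg_B G" for f
  proof -
    obtain F where F: "finite F" "\<And>B. B \<in> F \<Longrightarrow> compact_open_bisection G B" "f = charf (\<Union>F)"
      using steinberg_BE[OF f] by blast
    show ?thesis using cong_Union_zero[OF F(1) cong_zero_bisection[OF mini V F(2)]] F(3) by simp
  qed
  show "steinberg_B G \<times> steinberg_B G \<subseteq> R"
  proof clarify
    fix f h assume "f \<in> steinberg_B G" "h \<in> steinberg_B G"
    then show "(f, h) \<in> R" using zero cong_sym cong_trans by blast
  qed
qed

lemma cong_units_pair:
  assumes reg: "\<And>K. compactin X K \<Longrightarrow> openin X K \<Longrightarrow> regular_open_in X K"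
    and ab: "(a, b) \<in> R" "a g" "\<not> b g"
  obtains p q N where "(p, q) \<in> R" "openin X N" "N \<noteq> {}" "N \<subseteq> U"
    "\<And>u. u \<in> N \<Longrightarrow> p u" "\<And>u. u \<in> U \<Longrightarrow> \<not> q u"
proof -
  have a: "a \<in> steinberg_B G" and b: "b \<in> steinberg_B G" using cong_in_carrier[OF ab(1)] by auto
  obtain Fa where Fa: "finite Fa" "\<And>B. B \<in> Fa \<Longrightarrow> compact_open_bisection G B" "a = charf (\<Union>Fa)"
    using steinberg_BE[OF a] by blast
  obtain Fb where Fb: "finite Fb" "\<And>B. B \<in> Fb \<Longrightarrow> compact_open_bisection G B" "b = charf (\<Union>Fb)"
    using steinberg_BE[OF b] by blast
  obtain B where B: "B \<in> Fa" "g \<in> B" using ab(2) Fa(3) by auto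
  have "compactin X (\<Union>Fb)" "openin X (\<Union>Fb)"
    using Fb(1,2) unfolding compact_open_bisection_def by (auto intro: compactin_Union)
  then have "regular_open_in X (\<Union>Fb)" by (rule reg)
  moreover have "openin X B" using Fa(2)[OF B(1)] unfolding compact_open_bisection_def by blast
  moreover have "\<not> B \<subseteq> \<Union>Fb" using B(2) ab(3) Fb(3) by blast
  ultimately obtain W where W: "compact_open_bisection G W" "W \<noteq> {}" "W \<subseteq> B" "W \<inter> \<Union>Fb = {}"
    by (rule regular_open_avoid)
  have WA: "W \<subseteq> A" and Wo: "openin X W"
    using W(1) unfolding compact_open_bisection_def bisection_def by blast+
  let ?p = "st_conv G (charf (i ` W)) a" and ?q = "st_conv G (charf (i ` W)) b"
  have "(?p, ?q) \<in> R"
    using cong_conv_left[OF ab(1) charf_in_steinberg_B[OF compact_open_bisection_inv[OF W(1)]]] .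
  moreover have "openin X (s ` W)" "s ` W \<noteq> {}" "s ` W \<subseteq> U"
    using src_open_image[OF Wo] W(2) WA by auto
  moreover have "?p u" if "u \<in> s ` W" for u
  proof -
    have "a w" if "w \<in> W" for w using that W(3) B(1) Fa(3) by blast
    then show ?thesis using st_conv_inv_on_src[OF WA] \<open>u \<in> s ` W\<close> by blast
  qed
  moreover have "\<not> ?q u" if "u \<in> U" for u
  proof (rule st_conv_inv_off_units[OF WA _ _ that])
    show "g \<in> A" if "b g" for g using steinberg_B_arrows[OF b that] .
    show "\<not> b w" if "w \<in> W" for w using that W(4) Fb(3) by blast
  qed
  ultimately show thesis by (rule that)
qed

lemma unit_zero_of_units_pair:
  assumes eff: "effective_groupoid G"
    and pq: "(p, q) \<in> R" and N: "openin X N" "N \<noteq> {}" "N \<subseteq> U" "\<And>u. u \<in> N \<Longrightarrow> p u"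
    and q: "\<And>u. u \<in> U \<Longrightarrow> \<not> q u"
  obtains V where "V \<subseteq> U" "V \<noteq> {}" "openin X V" "(charf V, \<lambda>_. False) \<in> R"
proof -
  have qS: "q \<in> steinberg_B G" using cong_in_carrier[OF pq] by blast
  obtain Fq where Fq: "finite Fq" "\<And>B. B \<in> Fq \<Longrightarrow> compact_open_bisection G B" "q = charf (\<Union>Fq)"
    using steinberg_BE[OF qS] by blast
  have "openin X D \<and> inj_on s D \<and> D \<inter> U = {}" if "D \<in> Fq" for D
  proof -
    have "D \<inter> U = {}" using q Fq(3) that by blast
    then show ?thesis using Fq(2)[OF that] unfolding compact_open_bisection_def bisection_def by blast
  qed
  then obtain N' where N': "openin X N'" "N' \<noteq> {}" "N' \<subseteq> N"
      "\<forall>d \<in> \<Union>Fq. s d \<in> N' \<longrightarrow> r d \<notin> N'"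
    using effective_avoid_bisections[OF eff Fq(1) _ N(1-3)] by blast
  obtain x where x: "x \<in> N'" using N'(2) by blast
  then have "x \<in> U" using N'(3) N(3) by blast
  with x obtain V where V: "compactin X V" "openin X V" "x \<in> V" "V \<subseteq> N'" "V \<subseteq> U"
    by (rule compact_open_unit_neighbourhood[OF N'(1)])
  have zV: "charf V \<in> steinberg_B G"
    using charf_in_steinberg_B[OF compact_open_bisection_of_units[OF V(5,1,2)]] .
  let ?sw = "\<lambda>f. st_conv G (charf V) (st_conv G f (charf V))"
  have "(?sw p, ?sw q) \<in> R" using cong_conv_left[OF cong_conv_right[OF pq zV] zV] .
  moreover have "?sw q = (\<lambda>_. False)"
  proof (rule st_conv_unit_sandwich_zero[OF V(5)])
    show "g \<in> A" if "q g" for g using steinberg_B_arrows[OF qS that] .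
    show "r e \<notin> V" if "q e" "s e \<in> V" for e using that N'(4) V(4) Fq(3) by blast
  qed
  ultimately have p0: "(?sw p, \<lambda>_. False) \<in> R" by simp
  have "?sw p v" if "v \<in> V" for v
    using st_conv_unit_sandwich_ge[OF V(5) _ that] N(4) V(4) N'(3) by blast
  then have "st_add (?sw p) (charf V) = ?sw p" by (auto simp: st_add_def)
  moreover have "(st_add (?sw p) (charf V), st_add (\<lambda>_. False) (charf V)) \<in> R"
    using cong_add[OF p0 zV] .
  ultimately have "(?sw p, charf V) \<in> R" by (simp add: st_add_def)
  then have "(charf V, \<lambda>_. False) \<in> R" using cong_trans[OF cong_sym p0] by blast
  moreover have "V \<noteq> {}" using V(3) by blast
  ultimately show thesis using that V(2,5) by blast
qed

end

theorem corollary3p9: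
  fixes G :: "('a, 'b) groupoid_scheme"
  assumes "ample_groupoid G"
    and "second_countable (gtop G)"
    and "minimal_groupoid G"
    and "effective_groupoid G"
    and "\<And>K. compactin (gtop G) K \<Longrightarrow> openin (gtop G) K \<Longrightarrow> regular_open_in (gtop G) K"
  shows "congruence_simple (steinberg_B G) st_add (st_conv G)"
  unfolding congruence_simple_def
proof (intro allI impI)
  fix R assume cong: "hemiring_congruence (steinberg_B G) st_add (st_conv G) R"
  have "openin (gtop G) (units G)"
    using assms(4) unfolding effective_groupoid_def by (metis openin_interior_of)
  then interpret steinberg_congruence G R
    using assms(1) cong by unfold_locales
  show "R = steinberg_B G \<times> steinberg_B G \<or> R = Id_on (steinberg_B G)"
  proof (rule disjCI)
    assume "R \<noteq> Id_on (steinberg_B G)"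
    then obtain a b g where "(a, b) \<in> R" "a g" "\<not> b g"
      by (rule exists_separating_pair)
    then obtain p q N where "(p, q) \<in> R" "openin X N" "N \<noteq> {}" "N \<subseteq> U"
        "\<And>u. u \<in> N \<Longrightarrow> p u" "\<And>u. u \<in> U \<Longrightarrow> \<not> q u"
      using cong_units_pair[OF assms(5) \<open>(a, b) \<in> R\<close> \<open>a g\<close> \<open>\<not> b g\<close>] by metis
    then obtain V where "V \<subseteq> U" "V \<noteq> {}" "openin X V" "(charf V, \<lambda>_. False) \<in> R"
      by (rule unit_zero_of_units_pair[OF assms(4)])
    then show "R = steinberg_B G \<times> steinberg_B G"
      by (rule full_if_unit_zero[OF assms(3)])
  qed
qed

end
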